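(* (i) The infinite fixed point beginning with $a$ of the morphism $a\to aca$, $b\to bc$, $c\to b$ is not $d$-automatic for any $d\ge2$. (ii) The infinite fixed point beginning with $a$ of the morphism $a\to aca$, $c\to cd$, $d\to c$ is not $d$-automatic for any $d\ge 2$.
   Context: For $d\ge 2$, a sequence is $d$-automatic if it is the letter-to-letter image of a fixed point of a morphism all of whose letter-images have length $d$. *)

theory Defs
  imports Main
begin

text \<open>The infinite word w is a fixed point of the morphism s if, for every n, the image under s
  of the length-n prefix of w is a prefix of w (for non-erasing s this is exactly s(w) = w).\<close>

definition is_fixed_point :: "('a \<Rightarrow> 'a list) \<Rightarrow> (nat \<Rightarrow> 'a) \<Rightarrow> bool" where
  "is_fixed_point s w \<longleftrightarrow>
     (\<forall>n. let p = concat (map s (map w [0..<n])) in p = map w [0..<length p])"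

text \<open>d-automatic: letter-to-letter image of a fixed point of a d-uniform morphism over a
  finite alphabet (the alphabet is taken, w.l.o.g., to be a finite set of naturals).\<close>

definition d_automatic :: "nat \<Rightarrow> (nat \<Rightarrow> 'b) \<Rightarrow> bool" where
  "d_automatic d x \<longleftrightarrow>
     (\<exists>(A::nat set) (s::nat \<Rightarrow> nat list) (u::nat \<Rightarrow> nat) (t::nat \<Rightarrow> 'b).
        finite A \<and> (\<forall>l\<in>A. length (s l) = d \<and> set (s l) \<subseteq> A) \<and>
        (\<forall>n. u n \<in> A) \<and> is_fixed_point s u \<and> x = t \<circ> u)"

datatype letter = La | Lb | Lc | Ld

fun sigma1 :: "letter \<Rightarrow> letter list" where
  "sigma1 La = [La, Lc, La]"
| "sigma1 Lb = [Lb, Lc]"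
| "sigma1 Lc = [Lb]"
| "sigma1 Ld = [Ld]"  (* Ld is not in the alphabet {a,b,c} of this morphism; irrelevant *)

fun sigma2 :: "letter \<Rightarrow> letter list" where
  "sigma2 La = [La, Lc, La]"
| "sigma2 Lc = [Lc, Ld]"
| "sigma2 Ld = [Lc]"
| "sigma2 Lb = [Lb]"  (* Lb is not in the alphabet {a,c,d} of this morphism; irrelevant *)

end

theory Submission
  imports Defs Complex_Main "HOL-Library.FuncSet"
begin

text \<open>
  Each fixed point contains arbitrarily long factors over a two-letter subalphabet
  (\<open>{b, c}\<close>, resp. \<open>{c, d}\<close>) on which the morphism acts as the Fibonacci morphism.
  Assigning the weight \<open>1 - \<theta>\<close> to \<open>b\<close> (resp. \<open>c\<close>) and \<open>-\<theta>\<close> to the other letter, with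
  \<open>\<theta> = (sqrt 5 - 1)/2\<close>, and a suitable weight to \<open>a\<close>, gives an eigenvector of the
  substitution for the eigenvalue \<open>-\<theta>\<close>; as \<open>|\<theta>| < 1\<close>, the weighted prefix sums of the fixed
  point stay bounded, so on every such factor the letter frequency is the irrational \<open>\<theta>\<close>
  with bounded discrepancy.

  In a \<open>d\<close>-automatic sequence, the block of length \<open>d^L\<close> at index \<open>n\<close> depends only on the
  letter \<open>u n\<close> of the underlying uniform fixed point. Hence the set of letters whose level-\<open>L\<close>
  block avoids the letters outside the subalphabet is obtained from the level-\<open>(L - 1)\<close> set by
  a fixed map on a finite set, so it is eventually periodic with some period \<open>P\<close>. Block
  weights at level \<open>j + (m + k)P\<close> are then sums of \<open>d^(kP)\<close> block weights at level \<open>j + mP\<close>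
  of good blocks. By pigeonhole there are \<open>m < m'\<close> at which these good blocks have the same
  weight offsets relative to one fixed good block; then the weights at levels \<open>j + (m + k)P\<close>
  and \<open>j + (m' + k)P\<close> differ by exactly \<open>d^(kP)\<close> times the difference at levels \<open>j + mP\<close> and
  \<open>j + m'P\<close>, and bounded discrepancy for all \<open>k\<close> forces \<open>\<theta>\<close> to be rational.
\<close>

lemma finite_range_repeats:
  fixes f :: "nat \<Rightarrow> 'a"
  assumes "finite (range f)"
  obtains m m' where "m < m'" "f m = f m'"
proof -
  have "\<not> inj f"
    using assms finite_imageD infinite_UNIV_nat by blast
  then obtain a b where "a \<noteq> b" "f a = f b"
    unfolding inj_def by blast
  then show ?thesis
    using that by (metis linorder_neqE_nat)
qed

lemma finite_range_iterate_periodic: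
  fixes f :: "nat \<Rightarrow> 'a"
  assumes "finite (range f)" and step: "\<And>n. f (Suc n) = F (f n)"
  obtains j P where "0 < P" "\<And>m. f (j + m*P) = f j"
proof -
  obtain j j' where jj: "j < j'" "f j = f j'"
    using finite_range_repeats[OF assms(1)] .
  have shift: "f (j + k) = f (j' + k)" for k
    by (induction k) (simp_all add: jj step)
  have "f (j + m*(j' - j)) = f j" for m
  proof (induction m)
    case (Suc m)
    have "j + Suc m * (j' - j) = j' + m*(j' - j)"
      using jj(1) by simp
    then show ?case
      using shift[of "m*(j' - j)"] Suc by simp
  qed simp
  then show ?thesis
    using that[of "j' - j" j] jj(1) by simp
qed

lemma sum_lessThan_mult_blocks:
  fixes f :: "nat \<Rightarrow> 'a::comm_monoid_add"
  shows "(\<Sum>r<a*b. f r) = (\<Sum>q<a. \<Sum>r<b. f (q*b + r))"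
proof -
  have "(\<Sum>r<b. f (q*b + r)) = sum f {q*b..<q*b + b}" for q
    using sum.shift_bounds_nat_ivl[of f 0 "q*b" b] by (simp add: atLeast0LessThan add.commute)
  then show ?thesis
    using sum.nat_group[of f b a] by simp
qed

lemma power_mult_abs_bounded_imp_zero:
  fixes a E B :: real
  assumes "1 < E" and bounded: "\<And>k. E^k * \<bar>a\<bar> \<le> B"
  shows "a = 0"
proof (rule ccontr)
  assume "a \<noteq> 0"
  then have "0 < \<bar>a\<bar>" by simp
  obtain k where "B / \<bar>a\<bar> < E^k"
    using real_arch_pow[OF \<open>1 < E\<close>] by blast
  with \<open>0 < \<bar>a\<bar>\<close> have "B < E^k * \<bar>a\<bar>"
    by (simp add: field_simps)
  with bounded[of k] show False by simp
qed

lemma uniform_fixed_point_prefix: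
  assumes fixed: "is_fixed_point s u" and uniform: "\<And>n. length (s (u n)) = d"
  shows "concat (map s (map u [0..<n])) = map u [0..<d*n]"
proof -
  have "length (concat (map s (map u [0..<n]))) = d*n"
    by (induction n) (simp_all add: uniform)
  with fixed show ?thesis
    unfolding is_fixed_point_def Let_def by metis
qed

lemma uniform_fixed_point_nth:
  assumes fixed: "is_fixed_point s u" and uniform: "\<And>n. length (s (u n)) = d" and "r < d"
  shows "u (d*n + r) = s (u n) ! r"
proof -
  have "map u [0..<d*n + d] = map u [0..<d*n] @ s (u n)"
    using uniform_fixed_point_prefix[OF fixed uniform, of "Suc n"]
      uniform_fixed_point_prefix[OF fixed uniform, of n] by (simp add: add.commute)
  then have "map u [0..<d*n + d] ! (d*n + r) = s (u n) ! r"
    by (simp add: nth_append)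
  with \<open>r < d\<close> show ?thesis by simp
qed

lemma uniform_fixed_point_block_cong:
  assumes fixed: "is_fixed_point s u" and uniform: "\<And>n. length (s (u n)) = d"
    and "u n = u n'" and "r < d^L"
  shows "u (n*d^L + r) = u (n'*d^L + r)"
  using \<open>r < d^L\<close>
proof (induction L arbitrary: r)
  case 0
  then show ?case using \<open>u n = u n'\<close> by simp
next
  case (Suc L)
  then have "0 < d" by (cases "d = 0") auto
  have digits: "m*d^Suc L + r = d*(m*d^L + r div d) + r mod d" for m
    by (simp add: algebra_simps)
  have "r div d < d^L"
    using Suc.prems by (simp add: less_mult_imp_div_less mult.commute)
  with Suc.IH \<open>0 < d\<close> show ?case
    using uniform_fixed_point_nth[OF fixed uniform] digits by (metis mod_less_divisor)
qed

locale automatic_bounded_discrepancy =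
  fixes d :: nat and s :: "nat \<Rightarrow> nat list" and u :: "nat \<Rightarrow> nat"
    and x :: "nat \<Rightarrow> 'b" and G :: "'b set" and g :: "'b \<Rightarrow> int" and c K :: real
  assumes d_ge_2: "2 \<le> d"
    and finite_letters: "finite (range u)"
    and uniform: "\<And>n. length (s (u n)) = d"
    and fixed_point: "is_fixed_point s u"
    and x_factors: "\<And>n n'. u n = u n' \<Longrightarrow> x n = x n'"
    and long_factors: "\<And>N. \<exists>i. \<forall>k<N. x (i + k) \<in> G"
    and discrepancy: "\<And>i n. \<forall>k<n. x (i + k) \<in> G \<Longrightarrow>
        \<bar>(\<Sum>k<n. real_of_int (g (x (i + k)))) - c * n\<bar> \<le> K"
begin

definition block_good :: "nat \<Rightarrow> nat \<Rightarrow> bool" where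
  "block_good L n \<longleftrightarrow> (\<forall>r<d^L. x (n*d^L + r) \<in> G)"

definition block_weight :: "nat \<Rightarrow> nat \<Rightarrow> int" where
  "block_weight L n = (\<Sum>r<d^L. g (x (n*d^L + r)))"

lemma block_cong:
  assumes "u n = u n'"
  shows "block_good L n = block_good L n'" and "block_weight L n = block_weight L n'"
proof -
  have "x (n*d^L + r) = x (n'*d^L + r)" if "r < d^L" for r
    using uniform_fixed_point_block_cong[OF fixed_point uniform assms that] x_factors by blast
  then show "block_good L n = block_good L n'" "block_weight L n = block_weight L n'"
    unfolding block_good_def block_weight_def by (auto intro!: sum.cong)
qed

lemma block_index_add: "(n*d^M + q)*d^L + r = n*d^(L + M) + (q*d^L + r)"
  by (simp add: algebra_simps power_add)

lemma all_less_power_add_iff: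
  "(\<forall>r<d^(L + M). P r) \<longleftrightarrow> (\<forall>q<d^M. \<forall>r<d^L. P (q*d^L + r))"
proof
  assume P: "\<forall>q<d^M. \<forall>r<d^L. P (q*d^L + r)"
  show "\<forall>r<d^(L + M). P r"
  proof (intro allI impI)
    fix r assume "r < d^(L + M)"
    then have "r div d^L < d^M" "r mod d^L < d^L"
      using d_ge_2 less_mult_imp_div_less[of r "d^M" "d^L"] by (simp_all add: power_add mult.commute)
    then have "P (r div d^L * d^L + r mod d^L)"
      using P by blast
    then show "P r" by (simp only: div_mult_mod_eq)
  qed
next
  assume P: "\<forall>r<d^(L + M). P r"
  show "\<forall>q<d^M. \<forall>r<d^L. P (q*d^L + r)"
  proof (intro allI impI)
    fix q r assume "q < d^M" "r < d^L"
    then have "q*d^L + r < (q + 1)*d^L" by simp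
    also have "\<dots> \<le> d^M * d^L" using \<open>q < d^M\<close> by (intro mult_right_mono) auto
    finally show "P (q*d^L + r)"
      using P by (simp add: power_add mult.commute)
  qed
qed

lemma block_good_add:
  "block_good (L + M) n \<longleftrightarrow> (\<forall>q<d^M. block_good L (n*d^M + q))"
  unfolding block_good_def block_index_add by (rule all_less_power_add_iff)

lemma block_weight_add:
  "block_weight (L + M) n = (\<Sum>q<d^M. block_weight L (n*d^M + q))"
proof -
  have "block_weight (L + M) n = (\<Sum>r<d^M * d^L. g (x (n*d^(L + M) + r)))"
    by (simp add: block_weight_def power_add mult.commute)
  also have "\<dots> = (\<Sum>q<d^M. \<Sum>r<d^L. g (x (n*d^(L + M) + (q*d^L + r))))"
    by (rule sum_lessThan_mult_blocks)
  finally show ?thesis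
    by (simp add: block_weight_def block_index_add)
qed

lemma block_weight_bound:
  assumes "block_good L n"
  shows "\<bar>real_of_int (block_weight L n) - c * d^L\<bar> \<le> K"
  using discrepancy[of "d^L" "n*d^L"] assms
  by (simp add: block_good_def block_weight_def)

lemma block_good_exists: "\<exists>n. block_good L n"
proof -
  define D where "D = d^L"
  have "0 < D" using d_ge_2 by (simp add: D_def)
  obtain i where i: "\<forall>k<2*D. x (i + k) \<in> G"
    using long_factors by blast
  have "x ((i div D + 1)*D + r) \<in> G" if "r < D" for r
  proof -
    have "i mod D < D"
      using \<open>0 < D\<close> by simp
    then have "(i div D + 1)*D + r = i + (D - i mod D + r)" and "D - i mod D + r < 2*D"
      using \<open>r < D\<close> div_mult_mod_eq[of i D] unfolding distrib_right mult_1 by linarith+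
    with i show ?thesis by metis
  qed
  then show ?thesis
    unfolding block_good_def D_def by blast
qed

definition good_letters :: "nat \<Rightarrow> nat set" where
  "good_letters L = {\<alpha> \<in> range u. block_good L (inv u \<alpha>)}"

lemma block_good_iff_good_letter: "block_good L n \<longleftrightarrow> u n \<in> good_letters L"
proof -
  have "u (inv u (u n)) = u n"
    by (simp add: f_inv_into_f)
  then have "block_good L (inv u (u n)) = block_good L n"
    by (rule block_cong)
  then show ?thesis
    unfolding good_letters_def by simp
qed

lemma good_letters_Suc: "good_letters (Suc L) = {\<alpha> \<in> range u. \<forall>q<d. s \<alpha> ! q \<in> good_letters L}"
proof -
  have "block_good (Suc L) (inv u \<alpha>) \<longleftrightarrow> (\<forall>q<d. s \<alpha> ! q \<in> good_letters L)" if "\<alpha> \<in> range u" for \<alpha>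
  proof -
    have "block_good (Suc L) (inv u \<alpha>) \<longleftrightarrow> (\<forall>q<d. u (d * inv u \<alpha> + q) \<in> good_letters L)"
      using block_good_add[of L 1 "inv u \<alpha>"] by (simp add: block_good_iff_good_letter mult.commute)
    also have "\<dots> \<longleftrightarrow> (\<forall>q<d. s \<alpha> ! q \<in> good_letters L)"
      using uniform_fixed_point_nth[OF fixed_point uniform] f_inv_into_f[OF that] by simp
    finally show ?thesis .
  qed
  then show ?thesis
    unfolding good_letters_def by auto
qed

lemma good_letters_periodic:
  obtains j P where "0 < P" "\<And>m. good_letters (j + m*P) = good_letters j"
proof -
  have "range good_letters \<subseteq> Pow (range u)"
    unfolding good_letters_def by auto
  then have "finite (range good_letters)"
    using finite_letters by (meson finite_Pow_iff finite_subset)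
  moreover have "good_letters (Suc n) = (\<lambda>Z. {\<alpha> \<in> range u. \<forall>q<d. s \<alpha> ! q \<in> Z}) (good_letters n)" for n
    by (simp add: good_letters_Suc)
  ultimately show ?thesis
    using that by (rule finite_range_iterate_periodic)
qed

definition weight_offset :: "nat \<Rightarrow> nat \<Rightarrow> nat \<Rightarrow> int" where
  "weight_offset L n \<alpha> = block_weight L (inv u \<alpha>) - block_weight L n"

lemma weight_offset_bound:
  assumes "block_good L n" and "\<alpha> \<in> good_letters L"
  shows "weight_offset L n \<alpha> \<in> {-\<lceil>2*K\<rceil>..\<lceil>2*K\<rceil>}"
proof -
  have "block_good L (inv u \<alpha>)"
    using assms(2) unfolding good_letters_def by simp
  then have "\<bar>real_of_int (block_weight L (inv u \<alpha>)) - c * real (d^L)\<bar> \<le> K"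
    by (rule block_weight_bound)
  moreover have "\<bar>real_of_int (block_weight L n) - c * real (d^L)\<bar> \<le> K"
    using assms(1) by (rule block_weight_bound)
  ultimately have "\<bar>real_of_int (weight_offset L n \<alpha>)\<bar> \<le> 2*K"
    unfolding weight_offset_def of_int_diff by linarith
  then show ?thesis
    unfolding atLeastAtMost_iff by linarith
qed

lemma block_weight_add_offsets:
  "block_weight (L + M) n = int (d^M) * block_weight L n + (\<Sum>q<d^M. weight_offset L n (u (n*d^M + q)))"
proof -
  have "block_weight L (inv u (u p)) = block_weight L p" for p
    by (rule block_cong(2)) (simp add: f_inv_into_f)
  then show ?thesis
    by (simp add: block_weight_add weight_offset_def sum_subtractf)
qed

context
  fixes j P n :: nat
  assumes periodic: "\<And>m. good_letters (j + m*P) = good_letters j" and good: "block_good j n"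
begin

lemma block_good_periodic: "block_good (j + m*P) n"
  using good periodic by (simp add: block_good_iff_good_letter)

lemma weight_offsets_repeat:
  obtains m m' where "m < m'"
    and "restrict (weight_offset (j + m*P) n) (good_letters j) = restrict (weight_offset (j + m'*P) n) (good_letters j)"
proof -
  define B where "B = \<lceil>2*K\<rceil>"
  have "weight_offset (j + m*P) n \<alpha> \<in> {-B..B}" if "\<alpha> \<in> good_letters j" for m \<alpha>
    using weight_offset_bound[OF block_good_periodic] periodic that unfolding B_def by metis
  then have "range (\<lambda>m. restrict (weight_offset (j + m*P) n) (good_letters j))
      \<subseteq> (\<Pi>\<^sub>E \<alpha>\<in>good_letters j. {-B..B})"
    by (auto simp: PiE_iff)
  moreover have "finite (good_letters j)"
    using finite_letters unfolding good_letters_def by simp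
  ultimately have "finite (range (\<lambda>m. restrict (weight_offset (j + m*P) n) (good_letters j)))"
    by (rule finite_subset[OF _ finite_PiE]) simp
  then show ?thesis
    using that by (rule finite_range_repeats)
qed

lemma block_weight_difference_close:
  assumes same: "restrict (weight_offset (j + m*P) n) (good_letters j)
      = restrict (weight_offset (j + m'*P) n) (good_letters j)"
  shows "real (d^P)^k * \<bar>real_of_int (block_weight (j + m'*P) n - block_weight (j + m*P) n)
      - c * (real (d^(j + m'*P)) - real (d^(j + m*P)))\<bar> \<le> 2*K"
proof -
  have level: "j + (l + k)*P = (j + l*P) + k*P" for l
    by (simp add: algebra_simps)
  define E where "E = real (d^(k*P))"
  define S where "S l = (\<Sum>q<d^(k*P). weight_offset (j + l*P) n (u (n*d^(k*P) + q)))" for l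
  have "u (n*d^(k*P) + q) \<in> good_letters j" if "q < d^(k*P)" for q
  proof -
    have "block_good (j + m*P) (n*d^(k*P) + q)"
      using block_good_periodic[of "m + k"] block_good_add that unfolding level by blast
    then show ?thesis
      using periodic[of m] by (simp add: block_good_iff_good_letter)
  qed
  moreover have "weight_offset (j + m*P) n \<alpha> = weight_offset (j + m'*P) n \<alpha>" if "\<alpha> \<in> good_letters j" for \<alpha>
    using fun_cong[OF same, of \<alpha>] that by simp
  ultimately have "S m = S m'"
    unfolding S_def by (intro sum.cong) auto
  have weight: "real_of_int (block_weight (j + (l + k)*P) n)
      = E * real_of_int (block_weight (j + l*P) n) + S l" for l
    unfolding level block_weight_add_offsets S_def E_def by simp
  have power: "real (d^(j + (l + k)*P)) = E * real (d^(j + l*P))" for l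
    unfolding level E_def by (simp add: power_add)
  have difference: "E * (real_of_int (block_weight (j + m'*P) n - block_weight (j + m*P) n)
      - c * (real (d^(j + m'*P)) - real (d^(j + m*P))))
    = (real_of_int (block_weight (j + (m' + k)*P) n) - c * real (d^(j + (m' + k)*P)))
      - (real_of_int (block_weight (j + (m + k)*P) n) - c * real (d^(j + (m + k)*P)))"
    unfolding weight power using \<open>S m = S m'\<close> by (simp add: algebra_simps)
  have bound: "\<bar>real_of_int (block_weight (j + (l + k)*P) n) - c * real (d^(j + (l + k)*P))\<bar> \<le> K" for l
    by (rule block_weight_bound[OF block_good_periodic])
  have "\<bar>E * (real_of_int (block_weight (j + m'*P) n - block_weight (j + m*P) n)
      - c * (real (d^(j + m'*P)) - real (d^(j + m*P))))\<bar> \<le> 2*K"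
    unfolding difference using abs_triangle_ineq4 bound[of m] bound[of m'] by (smt (verit))
  moreover have "real (d^P)^k = E"
    unfolding E_def by (simp add: power_mult[symmetric] mult.commute)
  ultimately show ?thesis
    by (simp add: abs_mult E_def)
qed

end

theorem frequency_rational: "c \<in> \<rat>"
proof -
  obtain j P where "0 < P" and periodic: "\<And>m. good_letters (j + m*P) = good_letters j"
    using good_letters_periodic by metis
  obtain n where n: "block_good j n"
    using block_good_exists by blast
  obtain m m' where "m < m'" and "restrict (weight_offset (j + m*P) n) (good_letters j)
      = restrict (weight_offset (j + m'*P) n) (good_letters j)"
    using weight_offsets_repeat[OF periodic n] by metis
  define a where "a = real_of_int (block_weight (j + m'*P) n - block_weight (j + m*P) n)"
  define D where "D = real (d^(j + m'*P)) - real (d^(j + m*P))"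
  have "real (d^P)^k * \<bar>a - c * D\<bar> \<le> 2*K" for k
    unfolding a_def D_def by (rule block_weight_difference_close[OF periodic n]) fact
  moreover have "1 < real (d^P)"
    using d_ge_2 \<open>0 < P\<close> by (simp add: one_less_power)
  ultimately have "a = c * D"
    using power_mult_abs_bounded_imp_zero by fastforce
  moreover have "0 < D"
    unfolding D_def using \<open>m < m'\<close> \<open>0 < P\<close> d_ge_2 by (simp add: power_strict_increasing)
  ultimately have "c = a / D"
    by simp
  then show ?thesis
    by (simp add: a_def D_def)
qed

end

theorem not_automatic_if_irrational_frequency:
  fixes x :: "nat \<Rightarrow> 'b" and G :: "'b set" and g :: "'b \<Rightarrow> int" and c K :: real
  assumes "2 \<le> d" and "c \<notin> \<rat>"
    and "\<And>N. \<exists>i. \<forall>k<N. x (i + k) \<in> G"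
    and "\<And>i n. \<forall>k<n. x (i + k) \<in> G \<Longrightarrow>
        \<bar>(\<Sum>k<n. real_of_int (g (x (i + k)))) - c * n\<bar> \<le> K"
  shows "\<not> d_automatic d x"
proof
  assume "d_automatic d x"
  then obtain A s u and t :: "nat \<Rightarrow> 'b" where "finite A" "\<forall>l\<in>A. length (s l) = d"
      "\<forall>n. u n \<in> A" "is_fixed_point s u" "x = t \<circ> u"
    unfolding d_automatic_def by blast
  then have "automatic_bounded_discrepancy d s u x G g c K"
    using assms by unfold_locales (auto intro: finite_subset)
  then show False
    using automatic_bounded_discrepancy.frequency_rational \<open>c \<notin> \<rat>\<close> by blast
qed

lemma sum_lessThan_add:
  fixes f :: "nat \<Rightarrow> 'a::comm_monoid_add"
  shows "(\<Sum>k<a + b. f k) = (\<Sum>k<a. f k) + (\<Sum>k<b. f (a + k))"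
  by (induction b) (simp_all add: add.assoc)

locale contracting_weight =
  fixes \<sigma> :: "'a::finite \<Rightarrow> 'a list" and x :: "nat \<Rightarrow> 'a" and w :: "'a \<Rightarrow> real" and \<mu> :: real
  assumes fixed_point: "is_fixed_point \<sigma> x"
    and nonerasing: "\<And>\<alpha>. \<sigma> \<alpha> \<noteq> []"
    and expanding_start: "2 \<le> length (\<sigma> (x 0))"
    and eigenvector: "\<And>\<alpha>. sum_list (map w (\<sigma> \<alpha>)) = \<mu> * w \<alpha>"
    and contracting: "\<bar>\<mu>\<bar> < 1"
begin

definition pos :: "nat \<Rightarrow> nat" where
  "pos m = length (concat (map \<sigma> (map x [0..<m])))"

lemma image_prefix: "concat (map \<sigma> (map x [0..<m])) = map x [0..<pos m]"
  using fixed_point unfolding is_fixed_point_def pos_def Let_def by metis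

lemma pos_Suc: "pos (Suc m) = pos m + length (\<sigma> (x m))"
  by (simp add: pos_def)

lemma pos_add_ge: "pos i + j \<le> pos (i + j)"
proof (induction j)
  case (Suc j)
  have "0 < length (\<sigma> (x (i + j)))"
    using nonerasing by simp
  then show ?case
    unfolding add_Suc_right pos_Suc using Suc.IH by linarith
qed simp

lemma pos_Suc_gt: "Suc m < pos (Suc m)"
  using pos_add_ge[of 1 m] expanding_start by (simp add: pos_def)

lemma image_factor:
  assumes "i \<le> j"
  shows "map x [pos i..<pos j] = concat (map \<sigma> (map x [i..<j]))"
proof -
  have "pos i \<le> pos j"
    using pos_add_ge[of i "j - i"] assms by simp
  then have "map x [0..<pos j] = map x [0..<pos i] @ map x [pos i..<pos j]"
    using upt_add_eq_append[of 0 "pos i" "pos j - pos i"] by simp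
  moreover have "map x [0..<pos j] = map x [0..<pos i] @ concat (map \<sigma> (map x [i..<j]))"
    using image_prefix[of i] image_prefix[of j] upt_add_eq_append[of 0 i "j - i"] assms by simp
  ultimately show ?thesis by simp
qed

lemma nth_image:
  assumes "r < length (\<sigma> (x m))"
  shows "x (pos m + r) = \<sigma> (x m) ! r"
proof -
  have "map x [pos m..<pos (Suc m)] = \<sigma> (x m)"
    using image_factor[of m "Suc m"] by simp
  moreover have "x (pos m + r) = map x [pos m..<pos (Suc m)] ! r"
    using assms by (simp add: pos_Suc)
  ultimately show ?thesis
    by simp
qed

lemma pos_decompose: "\<exists>m r. n = pos m + r \<and> r < length (\<sigma> (x m))"
proof (induction n)
  case 0
  show ?case
    using nonerasing[of "x 0"] by (intro exI[of _ 0]) (simp add: pos_def)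
next
  case (Suc n)
  then obtain m r where mr: "n = pos m + r" "r < length (\<sigma> (x m))"
    by blast
  show ?case
  proof (cases "Suc r < length (\<sigma> (x m))")
    case True
    with mr show ?thesis
      by (intro exI[of _ m] exI[of _ "Suc r"]) simp
  next
    case False
    then have "Suc n = pos (Suc m) + 0"
      using mr by (simp add: pos_Suc)
    then show ?thesis
      using nonerasing[of "x (Suc m)"] by blast
  qed
qed

lemma long_factors:
  assumes closed: "\<And>\<alpha>. \<alpha> \<in> G \<Longrightarrow> set (\<sigma> \<alpha>) \<subseteq> G"
    and \<beta>: "\<beta> \<in> G" "\<sigma> \<beta> ! 0 = \<beta>" "2 \<le> length (\<sigma> \<beta>)" and "x i\<^sub>0 = \<beta>"
  shows "\<exists>i. \<forall>k<N. x (i + k) \<in> G"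
proof -
  have "\<exists>i n. N < n \<and> x i = \<beta> \<and> set (map x [i..<i + n]) \<subseteq> G" for N
  proof (induction N)
    case 0
    show ?case
      using \<open>x i\<^sub>0 = \<beta>\<close> \<beta>(1) by (intro exI[of _ i\<^sub>0] exI[of _ 1]) simp
  next
    case (Suc N)
    then obtain i n where "N < n" "x i = \<beta>" and G: "set (map x [i..<i + n]) \<subseteq> G"
      by blast
    have "set (map x [pos i..<pos (i + n)]) \<subseteq> G"
      using G closed by (auto simp: image_factor)
    moreover have "x (pos i) = \<beta>"
      using nth_image[of 0 i] \<open>x i = \<beta>\<close> \<beta>(2,3) by fastforce
    moreover have "pos i + n + 1 \<le> pos (i + n)"
      using pos_add_ge[of "Suc i" "n - 1"] \<open>N < n\<close> \<open>x i = \<beta>\<close> \<beta>(3) by (simp add: pos_Suc)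
    then have "Suc N < pos (i + n) - pos i" and "pos i + (pos (i + n) - pos i) = pos (i + n)"
      using \<open>N < n\<close> by linarith+
    ultimately show ?case
      by metis
  qed
  then obtain i n where "N < n" "set (map x [i..<i + n]) \<subseteq> G"
    by blast
  then show ?thesis
    by (intro exI[of _ i]) auto
qed

definition weight_prefix :: "nat \<Rightarrow> real" where
  "weight_prefix n = (\<Sum>k<n. w (x k))"

lemma weight_prefix_pos_add:
  assumes "r \<le> length (\<sigma> (x m))"
  shows "weight_prefix (pos m + r) = weight_prefix (pos m) + (\<Sum>k<r. w (\<sigma> (x m) ! k))"
  unfolding weight_prefix_def sum_lessThan_add using assms by (simp add: nth_image)

lemma weight_prefix_pos: "weight_prefix (pos m) = \<mu> * weight_prefix m"
proof (induction m)
  case 0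
  then show ?case by (simp add: pos_def weight_prefix_def)
next
  case (Suc m)
  have "(\<Sum>k<length (\<sigma> (x m)). w (\<sigma> (x m) ! k)) = \<mu> * w (x m)"
    using eigenvector[of "x m"] by (simp add: sum_list_sum_nth atLeast0LessThan)
  with Suc show ?case
    using weight_prefix_pos_add[of "length (\<sigma> (x m))" m]
    by (simp add: pos_Suc weight_prefix_def algebra_simps)
qed

definition letter_bound :: real where
  "letter_bound = (\<Sum>\<alpha>\<in>UNIV. \<Sum>\<beta>\<leftarrow>\<sigma> \<alpha>. \<bar>w \<beta>\<bar>)"

lemma partial_image_weight_bound:
  assumes "r \<le> length (\<sigma> \<alpha>)"
  shows "\<bar>\<Sum>k<r. w (\<sigma> \<alpha> ! k)\<bar> \<le> letter_bound"
proof -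
  have "\<bar>\<Sum>k<r. w (\<sigma> \<alpha> ! k)\<bar> \<le> (\<Sum>k<r. \<bar>w (\<sigma> \<alpha> ! k)\<bar>)"
    by (rule sum_abs)
  also have "\<dots> \<le> (\<Sum>k<length (\<sigma> \<alpha>). \<bar>w (\<sigma> \<alpha> ! k)\<bar>)"
    using assms by (intro sum_mono2) auto
  also have "\<dots> = (\<Sum>\<beta>\<leftarrow>\<sigma> \<alpha>. \<bar>w \<beta>\<bar>)"
    by (simp add: sum_list_sum_nth[of "map (\<lambda>\<beta>. \<bar>w \<beta>\<bar>) (\<sigma> \<alpha>)"] atLeast0LessThan)
  also have "\<dots> \<le> letter_bound"
    unfolding letter_bound_def by (rule member_le_sum) (auto intro!: sum_list_nonneg)
  finally show ?thesis .
qed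

lemma weight_prefix_bound: "\<bar>weight_prefix n\<bar> \<le> letter_bound / (1 - \<bar>\<mu>\<bar>)"
proof (induction n rule: less_induct)
  case (less n)
  obtain m r where n: "n = pos m + r" and r: "r < length (\<sigma> (x m))"
    using pos_decompose by blast
  have "0 \<le> letter_bound"
    using partial_image_weight_bound[of 0] by simp
  show ?case
  proof (cases "n = 0")
    case True
    then show ?thesis
      using \<open>0 \<le> letter_bound\<close> contracting by (simp add: weight_prefix_def)
  next
    case False
    have "m < n"
    proof (cases m)
      case 0
      with False n show ?thesis by simp
    next
      case (Suc m')
      with n pos_Suc_gt[of m'] show ?thesis by simp
    qed
    have "weight_prefix n = \<mu> * weight_prefix m + (\<Sum>k<r. w (\<sigma> (x m) ! k))"
      using weight_prefix_pos_add[of r m] weight_prefix_pos[of m] r n by simp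
    then have "\<bar>weight_prefix n\<bar> \<le> \<bar>\<mu> * weight_prefix m\<bar> + \<bar>\<Sum>k<r. w (\<sigma> (x m) ! k)\<bar>"
      by (simp only: abs_triangle_ineq)
    also have "\<dots> \<le> \<bar>\<mu>\<bar> * \<bar>weight_prefix m\<bar> + letter_bound"
      using partial_image_weight_bound[of r "x m"] r by (simp add: abs_mult)
    also have "\<dots> \<le> \<bar>\<mu>\<bar> * (letter_bound / (1 - \<bar>\<mu>\<bar>)) + letter_bound"
      using mult_left_mono[OF less.IH[OF \<open>m < n\<close>] abs_ge_zero[of \<mu>]] by simp
    also have "\<dots> = letter_bound / (1 - \<bar>\<mu>\<bar>)"
      using contracting by (simp add: field_simps)
    finally show ?thesis .
  qed
qed

lemma factor_weight_bound: "\<bar>\<Sum>k<n. w (x (i + k))\<bar> \<le> 2 * (letter_bound / (1 - \<bar>\<mu>\<bar>))"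
proof -
  have "(\<Sum>k<n. w (x (i + k))) = weight_prefix (i + n) - weight_prefix i"
    unfolding weight_prefix_def by (simp add: sum_lessThan_add)
  then show ?thesis
    using weight_prefix_bound[of "i + n"] weight_prefix_bound[of i] by linarith
qed

theorem not_automatic:
  fixes g :: "'a \<Rightarrow> int"
  assumes "2 \<le> d" and "c \<notin> \<rat>"
    and "\<And>\<alpha>. \<alpha> \<in> G \<Longrightarrow> set (\<sigma> \<alpha>) \<subseteq> G"
    and "\<beta> \<in> G" "\<sigma> \<beta> ! 0 = \<beta>" "2 \<le> length (\<sigma> \<beta>)" "x i\<^sub>0 = \<beta>"
    and weight: "\<And>\<alpha>. \<alpha> \<in> G \<Longrightarrow> w \<alpha> = of_int (g \<alpha>) - c"
  shows "\<not> d_automatic d x"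
proof (rule not_automatic_if_irrational_frequency[OF assms(1,2)])
  show "\<exists>i. \<forall>k<N. x (i + k) \<in> G" for N
    using long_factors assms(3-7) by blast
  show "\<bar>(\<Sum>k<n. real_of_int (g (x (i + k)))) - c * n\<bar> \<le> 2 * (letter_bound / (1 - \<bar>\<mu>\<bar>))"
    if "\<forall>k<n. x (i + k) \<in> G" for i n
  proof -
    have "(\<Sum>k<n. real_of_int (g (x (i + k)))) - c * n = (\<Sum>k<n. w (x (i + k)))"
      using that weight by (simp add: sum_subtractf)
    then show ?thesis
      using factor_weight_bound by simp
  qed
qed

end

instance letter :: finite
proof
  show "finite (UNIV :: letter set)"
    by (rule finite_subset[of _ "{La, Lb, Lc, Ld}"]) (use letter.exhaust in auto)
qed

definition inv_golden :: real where
  "inv_golden = (sqrt 5 - 1) / 2"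

lemma inv_golden_square: "inv_golden * inv_golden = 1 - inv_golden"
  unfolding inv_golden_def by (simp add: field_simps)

lemma inv_golden_bounds: "0 < inv_golden" "inv_golden < 1"
proof -
  have "1 < sqrt 5" "sqrt 5 < 3"
    by (simp_all add: real_less_rsqrt real_less_lsqrt)
  then show "0 < inv_golden" "inv_golden < 1"
    unfolding inv_golden_def by simp_all
qed

lemma coprime_square_add_mult_neq_square:
  fixes m n :: nat
  assumes "coprime m n"
  shows "m^2 + m*n \<noteq> n^2"
proof
  assume eq: "m^2 + m*n = n^2"
  show False
  proof (cases "even n")
    case True
    then have "even m"
      using eq by (metis dvd_add_left_iff dvd_mult even_power zero_less_numeral)
    with True assms show False
      by auto
  next
    case False
    then show False
      using eq by (cases "even m") (auto dest: arg_cong[of _ _ even])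
  qed
qed

lemma inv_golden_irrational: "inv_golden \<notin> \<rat>"
proof
  assume "inv_golden \<in> \<rat>"
  then obtain m n :: nat where "n \<noteq> 0" "\<bar>inv_golden\<bar> = real m / real n" "coprime m n"
    by (rule Rats_abs_nat_div_natE)
  with inv_golden_bounds have m: "real m = inv_golden * real n"
    by (simp add: field_simps)
  have "real (m^2 + m*n) = (inv_golden * inv_golden + inv_golden) * real (n^2)"
    by (simp add: m power2_eq_square algebra_simps)
  then have "real (m^2 + m*n) = real (n^2)"
    by (simp add: inv_golden_square)
  with \<open>coprime m n\<close> show False
    using coprime_square_add_mult_neq_square of_nat_eq_iff by blast
qed

lemma sigma1_fixed_point_not_automatic:
  assumes fixed_point: "is_fixed_point sigma1 x" and "x 0 = La" and "2 \<le> d"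
  shows "\<not> d_automatic d x"
proof -
  define w where "w \<alpha> = (case \<alpha> of La \<Rightarrow> 2 * inv_golden - 1
      | Lb \<Rightarrow> 1 - inv_golden | Lc \<Rightarrow> - inv_golden | Ld \<Rightarrow> 0)" for \<alpha>
  interpret contracting_weight sigma1 x w "- inv_golden"
  proof
    show "sigma1 \<alpha> \<noteq> []" for \<alpha>
      by (cases \<alpha>) simp_all
    show "sum_list (map w (sigma1 \<alpha>)) = - inv_golden * w \<alpha>" for \<alpha>
      using inv_golden_square by (cases \<alpha>) (simp_all add: w_def algebra_simps)
    show "\<bar>- inv_golden\<bar> < 1"
      using inv_golden_bounds by simp
  qed (use fixed_point \<open>x 0 = La\<close> in simp_all)
  have "x 3 = Lb"
    using nth_image[of 1 0] nth_image[of 0 1] \<open>x 0 = La\<close> by (simp add: pos_def numeral_3_eq_3)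
  show ?thesis
    by (rule not_automatic[OF \<open>2 \<le> d\<close> inv_golden_irrational, of "{Lb, Lc}" Lb 3
          "\<lambda>\<alpha>. if \<alpha> = Lb then 1 else 0"]) (use \<open>x 3 = Lb\<close> in \<open>auto simp: w_def\<close>)
qed

lemma sigma2_fixed_point_not_automatic:
  assumes fixed_point: "is_fixed_point sigma2 x" and "x 0 = La" and "2 \<le> d"
  shows "\<not> d_automatic d x"
proof -
  define w where "w \<alpha> = (case \<alpha> of La \<Rightarrow> 3 * inv_golden - 2
      | Lc \<Rightarrow> 1 - inv_golden | Ld \<Rightarrow> - inv_golden | Lb \<Rightarrow> 0)" for \<alpha>
  interpret contracting_weight sigma2 x w "- inv_golden"
  proof
    show "sigma2 \<alpha> \<noteq> []" for \<alpha>
      by (cases \<alpha>) simp_all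
    show "sum_list (map w (sigma2 \<alpha>)) = - inv_golden * w \<alpha>" for \<alpha>
      using inv_golden_square by (cases \<alpha>) (simp_all add: w_def algebra_simps)
    show "\<bar>- inv_golden\<bar> < 1"
      using inv_golden_bounds by simp
  qed (use fixed_point \<open>x 0 = La\<close> in simp_all)
  have "x 1 = Lc"
    using nth_image[of 1 0] \<open>x 0 = La\<close> by (simp add: pos_def)
  show ?thesis
    by (rule not_automatic[OF \<open>2 \<le> d\<close> inv_golden_irrational, of "{Lc, Ld}" Lc 1
          "\<lambda>\<alpha>. if \<alpha> = Lc then 1 else 0"]) (use \<open>x 1 = Lc\<close> in \<open>auto simp: w_def\<close>)
qed

theorem corollary5p4:
  shows "(\<forall>x. is_fixed_point sigma1 x \<and> x 0 = La \<longrightarrow> (\<forall>d\<ge>2. \<not> d_automatic d x))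
       \<and> (\<forall>x. is_fixed_point sigma2 x \<and> x 0 = La \<longrightarrow> (\<forall>d\<ge>2. \<not> d_automatic d x))"
  using sigma1_fixed_point_not_automatic sigma2_fixed_point_not_automatic by blast

end
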